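(* Let $G$ act on the CAT(0) cube complex $X$ by automorphisms non-transversely, and let $\gamma$ be a segment. Then for all vertices $x,y,z$ of $X$, $$\left|\omega_{\gamma}(x,y)+\omega_{\gamma}(y,z)+\omega_{\gamma}(z,x)\right|\le 6.$$
   Context: $\mathcal{H}(X)$ is the set of halfspaces of $X$, $\overline\Phi$ the complement of $\Phi$. Two halfspaces are nested if one of $\Phi\subseteq\Psi$, $\overline{\Phi}\subseteq\Psi$, $\Phi\subseteq\overline{\Psi}$, $\overline{\Phi}\subseteq\overline{\Psi}$ holds, transverse otherwise; the action is non-transverse if there are no $\Phi\in\mathcal H(X)$, $h\in G$ with $\Phi$ and $h\Phi$ transverse. $\Phi\supsetneq\Psi$ tightly means $\Phi\supsetneq\Psi$ and no halfspace $\Phi'$ satisfies $\Phi\supsetneq\Phi'\supsetneq\Psi$. For vertices $x,y$, $[x,y]=\{\Phi\in\mathcal H(X): x\notin\Phi,\ y\in\Phi\}$. A segment is a finite sequence $\gamma=(\Phi_0,\dots,\Phi_r)$, $r\ge0$, of halfspaces with $\Phi_i\supsetneq\Phi_{i+1}$ tightly; its reverse is $\overline\gamma=(\overline\Phi_r,\dots,\overline\Phi_0)$. Two segments overlap if some halfspace of one is equal or transverse to some halfspace of the other. A segment is in $[x,y]$ if all its halfspaces lie in $[x,y]$. Copies of $\gamma$ are the segments $h\gamma$, $h\in G$. $c_\gamma(x,y)$ is the largest cardinality of a set of pairwise non-overlapping copies of $\gamma$ all lying in $[x,y]$, and $\omega_\gamma(x,y)=c_\gamma(x,y)-c_{\overline\gamma}(x,y)$.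 *)

theory Defs
  imports "HOL-Algebra.Group_Action"
begin

text \<open>CAT(0) cube complexes are modelled by their 1-skeleta, i.e. median graphs
  (Chepoi/Roller/Gerasimov).  The vertex set is the type 'v, adjacency is E.\<close>

definition graph_path :: "('v \<Rightarrow> 'v \<Rightarrow> bool) \<Rightarrow> 'v list \<Rightarrow> bool" where
  "graph_path E p \<longleftrightarrow> p \<noteq> [] \<and> (\<forall>i. Suc i < length p \<longrightarrow> E (p ! i) (p ! Suc i))"

definition graph_dist :: "('v \<Rightarrow> 'v \<Rightarrow> bool) \<Rightarrow> 'v \<Rightarrow> 'v \<Rightarrow> nat" where
  "graph_dist E x y = (LEAST n. \<exists>p. graph_path E p \<and> hd p = x \<and> last p = y \<and> length p = Suc n)"

definition geod_interval :: "('v \<Rightarrow> 'v \<Rightarrow> bool) \<Rightarrow> 'v \<Rightarrow> 'v \<Rightarrow> 'v set" where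
  "geod_interval E x y = {z. graph_dist E x z + graph_dist E z y = graph_dist E x y}"

definition median_graph :: "('v \<Rightarrow> 'v \<Rightarrow> bool) \<Rightarrow> bool" where
  "median_graph E \<longleftrightarrow>
     (\<forall>u v. E u v \<longrightarrow> E v u) \<and> (\<forall>u. \<not> E u u) \<and>
     (\<forall>x y. \<exists>p. graph_path E p \<and> hd p = x \<and> last p = y) \<and>
     (\<forall>x y z. \<exists>!m. m \<in> geod_interval E x y \<inter> geod_interval E y z \<inter> geod_interval E x z)"

definition convex_vset :: "('v \<Rightarrow> 'v \<Rightarrow> bool) \<Rightarrow> 'v set \<Rightarrow> bool" where
  "convex_vset E S \<longleftrightarrow> (\<forall>x\<in>S. \<forall>y\<in>S. geod_interval E x y \<subseteq> S)"

text \<open>Halfspaces = complementary components of hyperplanes = nonempty proper convex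
  vertex sets with convex complement.\<close>
definition halfspaces :: "('v \<Rightarrow> 'v \<Rightarrow> bool) \<Rightarrow> 'v set set" where
  "halfspaces E = {S. S \<noteq> {} \<and> S \<noteq> UNIV \<and> convex_vset E S \<and> convex_vset E (- S)}"

definition nested :: "'v set \<Rightarrow> 'v set \<Rightarrow> bool" where
  "nested A B \<longleftrightarrow> A \<subseteq> B \<or> - A \<subseteq> B \<or> A \<subseteq> - B \<or> - A \<subseteq> - B"

definition transverse :: "'v set \<Rightarrow> 'v set \<Rightarrow> bool" where
  "transverse A B \<longleftrightarrow> \<not> nested A B"

definition non_transverse_action :: "('v \<Rightarrow> 'v \<Rightarrow> bool) \<Rightarrow> ('g, 'm) monoid_scheme \<Rightarrow> ('g \<Rightarrow> 'v \<Rightarrow> 'v) \<Rightarrow> bool" where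
  "non_transverse_action E G \<phi> \<longleftrightarrow>
     \<not> (\<exists>A\<in>halfspaces E. \<exists>h\<in>carrier G. transverse A (\<phi> h ` A))"

definition tightly_contains :: "('v \<Rightarrow> 'v \<Rightarrow> bool) \<Rightarrow> 'v set \<Rightarrow> 'v set \<Rightarrow> bool" where
  "tightly_contains E A B \<longleftrightarrow> B \<subset> A \<and> \<not> (\<exists>C\<in>halfspaces E. C \<subset> A \<and> B \<subset> C)"

definition segment :: "('v \<Rightarrow> 'v \<Rightarrow> bool) \<Rightarrow> 'v set list \<Rightarrow> bool" where
  "segment E \<gamma> \<longleftrightarrow> \<gamma> \<noteq> [] \<and> set \<gamma> \<subseteq> halfspaces E \<and>
     (\<forall>i. Suc i < length \<gamma> \<longrightarrow> tightly_contains E (\<gamma> ! i) (\<gamma> ! Suc i))"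

definition seg_reverse :: "'v set list \<Rightarrow> 'v set list" where
  "seg_reverse \<gamma> = rev (map uminus \<gamma>)"

definition overlap :: "'v set list \<Rightarrow> 'v set list \<Rightarrow> bool" where
  "overlap \<gamma> \<delta> \<longleftrightarrow> (\<exists>A\<in>set \<gamma>. \<exists>B\<in>set \<delta>. A = B \<or> transverse A B)"

definition hs_interval :: "('v \<Rightarrow> 'v \<Rightarrow> bool) \<Rightarrow> 'v \<Rightarrow> 'v \<Rightarrow> 'v set set" where
  "hs_interval E x y = {A \<in> halfspaces E. x \<notin> A \<and> y \<in> A}"

definition copies :: "('g, 'm) monoid_scheme \<Rightarrow> ('g \<Rightarrow> 'v \<Rightarrow> 'v) \<Rightarrow> 'v set list \<Rightarrow> 'v set list set" where
  "copies G \<phi> \<gamma> = {map (\<lambda>A. \<phi> h ` A) \<gamma> | h. h \<in> carrier G}"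

definition c_count :: "('v \<Rightarrow> 'v \<Rightarrow> bool) \<Rightarrow> ('g, 'm) monoid_scheme \<Rightarrow> ('g \<Rightarrow> 'v \<Rightarrow> 'v)
    \<Rightarrow> 'v set list \<Rightarrow> 'v \<Rightarrow> 'v \<Rightarrow> nat" where
  "c_count E G \<phi> \<gamma> x y = Max {card S | S. S \<subseteq> copies G \<phi> \<gamma> \<and> finite S \<and>
      (\<forall>s\<in>S. set s \<subseteq> hs_interval E x y) \<and>
      (\<forall>s\<in>S. \<forall>t\<in>S. s \<noteq> t \<longrightarrow> \<not> overlap s t)}"

definition omega :: "('v \<Rightarrow> 'v \<Rightarrow> bool) \<Rightarrow> ('g, 'm) monoid_scheme \<Rightarrow> ('g \<Rightarrow> 'v \<Rightarrow> 'v)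
    \<Rightarrow> 'v set list \<Rightarrow> 'v \<Rightarrow> 'v \<Rightarrow> int" where
  "omega E G \<phi> \<gamma> x y = int (c_count E G \<phi> \<gamma> x y) - int (c_count E G \<phi> (seg_reverse \<gamma>) x y)"

end

(*
  Write c(a, b) for c_gamma(a, b). Reversing every copy identifies the families counted by
  c_{reverse gamma}(a, b) with those counted by c(b, a), so omega(a, b) = c(a, b) - c(b, a).

  For any vertex m, at most one member of a non-overlapping family in [a, b] crosses m, i.e. has
  consecutive halfspaces on both sides of m: the crossing halfspaces of two such members are nested,
  and tightness leaves no room for one strictly between two consecutive terms of the other.
  Hence c(a, b) <= c(a, m) + c(m, b) + 1.

  If m lies on a geodesic from a to b, maximal families in [a, m] and in [m, b] can be merged after
  discarding the members of the first that overlap the second. Non-transversality makes the j-th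
  halfspaces of any two copies nested, which forces such an overlapping member to be the one nearest
  to m, so at most one is discarded and c(a, m) + c(m, b) <= c(a, b) + 1.

  So omega(a, b) is within 2 of omega(a, m) + omega(m, b). Taking for m the median of x, y, z, the
  terms through m cancel around the triangle because omega is antisymmetric.
*)

theory Submission
  imports Defs
begin

section \<open>Median graphs and their automorphisms\<close>

lemma ex_crossing_index:
  assumes "a \<le> b" "\<not> P a" "P b"
  shows "\<exists>i. a \<le> i \<and> i < b \<and> \<not> P i \<and> P (Suc i)"
  using assms(1,3)
proof (induction b rule: dec_induct)
  case base
  then show ?case using assms(2) by simp
next
  case (step n)
  then show ?case by (cases "P n") (auto intro: less_SucI)
qed

lemma graph_path_iff_successively: "graph_path E p \<longleftrightarrow> p \<noteq> [] \<and> successively E p"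
  by (simp add: graph_path_def successively_conv_nth)

lemma graph_dist_le_length:
  assumes "graph_path E p" "hd p = x" "last p = y"
  shows "graph_dist E x y \<le> length p - 1"
  unfolding graph_dist_def using assms by (intro Least_le) (auto simp: graph_path_def)

lemma graph_dist_path:
  assumes "graph_path E p" "hd p = x" "last p = y"
  shows "\<exists>q. graph_path E q \<and> hd q = x \<and> last q = y \<and> length q = Suc (graph_dist E x y)"
  unfolding graph_dist_def
  by (rule LeastI_ex) (use assms in \<open>auto simp: graph_path_def intro!: exI[of _ "length p - 1"]\<close>)

lemma median_graph_connected: "median_graph E \<Longrightarrow> \<exists>p. graph_path E p \<and> hd p = x \<and> last p = y"
  unfolding median_graph_def by blast

lemma median_graph_dist_eq_0D:
  assumes "median_graph E" "graph_dist E x y = 0"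
  shows "x = y"
proof -
  obtain p where "graph_path E p" "hd p = x" "last p = y" "length p = Suc 0"
    using graph_dist_path median_graph_connected[OF assms(1)] assms(2) by metis
  then show ?thesis by (cases p) auto
qed

lemma median_graph_dist_edge:
  assumes "median_graph E" "E u v"
  shows "graph_dist E u v = 1"
proof -
  have "graph_path E [u, v]" using assms(2) by (simp add: graph_path_iff_successively)
  then have "graph_dist E u v \<le> 1" using graph_dist_le_length[of E "[u, v]"] by simp
  moreover have "u \<noteq> v" using assms unfolding median_graph_def by auto
  ultimately show ?thesis using median_graph_dist_eq_0D[OF assms(1), of u v] by linarith
qed

lemma graph_dist_commute:
  assumes "\<forall>u v. E u v \<longrightarrow> E v u"
  shows "graph_dist E x y = graph_dist E y x"
proof -
  have rev: "graph_path E (rev p) \<longleftrightarrow> graph_path E p" for p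
    using assms by (auto simp: graph_path_iff_successively elim!: successively_mono)
  have "(\<exists>p. graph_path E p \<and> hd p = x \<and> last p = y \<and> length p = Suc n) \<longleftrightarrow>
        (\<exists>p. graph_path E p \<and> hd p = y \<and> last p = x \<and> length p = Suc n)" for n x y
    using rev by (metis hd_rev last_rev length_rev)
  then show ?thesis unfolding graph_dist_def by simp
qed

lemma median_graph_geod_interval_commute:
  "median_graph E \<Longrightarrow> geod_interval E x y = geod_interval E y x"
  unfolding geod_interval_def median_graph_def
  using graph_dist_commute[of E] by (auto simp: add.commute)

lemma median_graph_geod_interval_edge:
  assumes "median_graph E" "E u v"
  shows "geod_interval E u v \<subseteq> {u, v}"
proof
  fix m assume "m \<in> geod_interval E u v"
  then have "graph_dist E u m = 0 \<or> graph_dist E m v = 0"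
    using median_graph_dist_edge[OF assms] unfolding geod_interval_def by (auto simp: add_is_1)
  then show "m \<in> {u, v}" using median_graph_dist_eq_0D[OF assms(1)] by blast
qed

lemma halfspaces_Compl: "A \<in> halfspaces E \<Longrightarrow> - A \<in> halfspaces E"
  unfolding halfspaces_def by auto

lemma halfspace_geod_interval:
  assumes "A \<in> halfspaces E" "m \<in> geod_interval E a b" "a \<in> A \<longleftrightarrow> b \<in> A"
  shows "m \<in> A \<longleftrightarrow> a \<in> A"
  using assms unfolding halfspaces_def convex_vset_def by (cases "a \<in> A") blast+

lemma hs_interval_subset_geod_interval:
  assumes "m \<in> geod_interval E a b"
  shows "hs_interval E a m \<subseteq> hs_interval E a b" "hs_interval E m b \<subseteq> hs_interval E a b"
  using halfspace_geod_interval[OF _ assms] unfolding hs_interval_def by blast+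

lemma median_graph_halfspace_edge:
  assumes "median_graph E" "E u v" "A \<in> halfspaces E" "u \<notin> A" "v \<in> A"
  shows "A = {w. u \<notin> geod_interval E v w}"
proof -
  have "w \<in> A \<longleftrightarrow> u \<notin> geod_interval E v w" for w
  proof
    assume "w \<in> A"
    then show "u \<notin> geod_interval E v w"
      using assms(3-5) unfolding halfspaces_def convex_vset_def by blast
  next
    assume u: "u \<notin> geod_interval E v w"
    show "w \<in> A"
    proof (rule ccontr)
      assume "w \<notin> A"
      obtain m where m: "m \<in> geod_interval E u v" "m \<in> geod_interval E v w" "m \<in> geod_interval E u w"
        using assms(1) unfolding median_graph_def by blast
      have "m = v"
        using median_graph_geod_interval_edge[OF assms(1,2)] m(1,2) u by auto
      moreover have "m \<notin> A"
        using halfspace_geod_interval[OF assms(3) m(3)] \<open>w \<notin> A\<close> assms(4) by blast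
      ultimately show False using assms(5) by simp
    qed
  qed
  then show ?thesis by blast
qed

lemma hs_interval_path_subset:
  assumes "graph_path E p"
  shows "hs_interval E (hd p) (last p) \<subseteq> (\<Union>i\<in>{i. Suc i < length p}. hs_interval E (p ! i) (p ! Suc i))"
proof
  fix A assume A: "A \<in> hs_interval E (hd p) (last p)"
  have "p \<noteq> []" using assms unfolding graph_path_def by simp
  then have "p ! 0 \<notin> A" "p ! (length p - 1) \<in> A"
    using A unfolding hs_interval_def by (auto simp: hd_conv_nth last_conv_nth)
  then obtain i where "i < length p - 1" "p ! i \<notin> A" "p ! Suc i \<in> A"
    using ex_crossing_index[of 0 "length p - 1" "\<lambda>i. p ! i \<in> A"] by auto
  then show "A \<in> (\<Union>i\<in>{i. Suc i < length p}. hs_interval E (p ! i) (p ! Suc i))"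
    using A unfolding hs_interval_def by (intro UN_I[of i]) auto
qed

lemma median_graph_finite_hs_interval:
  assumes "median_graph E"
  shows "finite (hs_interval E x y)"
proof -
  obtain p where p: "graph_path E p" "hd p = x" "last p = y"
    using median_graph_connected[OF assms] by blast
  have fin: "finite (hs_interval E (p ! i) (p ! Suc i))" if "Suc i < length p" for i
  proof (rule finite_subset)
    show "hs_interval E (p ! i) (p ! Suc i) \<subseteq> {{w. p ! i \<notin> geod_interval E (p ! Suc i) w}}"
      using median_graph_halfspace_edge[OF assms] p(1) that
      unfolding hs_interval_def graph_path_def by auto
  qed simp
  have "finite {i. Suc i < length p}"
    by (rule finite_subset[of _ "{..<length p}"]) auto
  then have "finite (\<Union>i\<in>{i. Suc i < length p}. hs_interval E (p ! i) (p ! Suc i))"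
    using fin by blast
  then show ?thesis
    using finite_subset[OF hs_interval_path_subset[OF p(1)]] p(2,3) by simp
qed

lemma segment_iff_successively:
  "segment E \<gamma> \<longleftrightarrow> \<gamma> \<noteq> [] \<and> set \<gamma> \<subseteq> halfspaces E \<and> successively (tightly_contains E) \<gamma>"
  by (simp add: segment_def successively_conv_nth)

definition graph_automorphism :: "('v \<Rightarrow> 'v \<Rightarrow> bool) \<Rightarrow> ('v \<Rightarrow> 'v) \<Rightarrow> bool" where
  "graph_automorphism E f \<longleftrightarrow> bij f \<and> (\<forall>u v. E u v \<longleftrightarrow> E (f u) (f v))"

lemma graph_automorphism_inv:
  assumes "graph_automorphism E f"
  shows "graph_automorphism E (inv_into UNIV f)"
  using assms unfolding graph_automorphism_def by (metis bij_imp_bij_inv bij_is_surj surj_f_inv_f)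

lemma graph_path_image:
  "graph_automorphism E f \<Longrightarrow> graph_path E (map f p) \<longleftrightarrow> graph_path E p"
  unfolding graph_automorphism_def by (simp add: graph_path_iff_successively successively_map)

lemma graph_dist_image:
  assumes f: "graph_automorphism E f"
  shows "graph_dist E (f a) (f b) = graph_dist E a b"
proof -
  have "(\<exists>q. graph_path E q \<and> hd q = f a \<and> last q = f b \<and> length q = Suc n) \<longleftrightarrow>
        (\<exists>p. graph_path E p \<and> hd p = a \<and> last p = b \<and> length p = Suc n)" for n
  proof
    assume "\<exists>q. graph_path E q \<and> hd q = f a \<and> last q = f b \<and> length q = Suc n"
    then obtain q where q: "graph_path E q" "hd q = f a" "last q = f b" "length q = Suc n"
      by blast
    have "graph_path E (map (inv_into UNIV f) q)"
      using q(1) graph_path_image[OF graph_automorphism_inv[OF f]] by simp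
    moreover have "q \<noteq> []" using q(4) by auto
    ultimately show "\<exists>p. graph_path E p \<and> hd p = a \<and> last p = b \<and> length p = Suc n"
      using q f unfolding graph_automorphism_def
      by (intro exI[of _ "map (inv_into UNIV f) q"]) (simp add: hd_map last_map bij_is_inj)
  next
    assume "\<exists>p. graph_path E p \<and> hd p = a \<and> last p = b \<and> length p = Suc n"
    then obtain p where p: "graph_path E p" "hd p = a" "last p = b" "length p = Suc n"
      by blast
    moreover have "p \<noteq> []" using p(4) by auto
    ultimately show "\<exists>q. graph_path E q \<and> hd q = f a \<and> last q = f b \<and> length q = Suc n"
      using graph_path_image[OF f] by (intro exI[of _ "map f p"]) (simp add: hd_map last_map)
  qed
  then show ?thesis unfolding graph_dist_def by simp
qed

lemma geod_interval_image_iff: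
  "graph_automorphism E f \<Longrightarrow> f w \<in> geod_interval E (f a) (f b) \<longleftrightarrow> w \<in> geod_interval E a b"
  unfolding geod_interval_def by (simp add: graph_dist_image)

lemma convex_vset_image:
  assumes f: "graph_automorphism E f" and S: "convex_vset E S"
  shows "convex_vset E (f ` S)"
  unfolding convex_vset_def
proof (intro ballI subsetI)
  fix x y z assume "x \<in> f ` S" "y \<in> f ` S" and z: "z \<in> geod_interval E x y"
  then obtain a b where ab: "a \<in> S" "b \<in> S" "x = f a" "y = f b"
    by blast
  obtain w where w: "z = f w"
    using f unfolding graph_automorphism_def by (meson bij_is_surj surjD)
  then have "w \<in> geod_interval E a b"
    using z ab(3,4) geod_interval_image_iff[OF f] by simp
  then show "z \<in> f ` S"
    using S ab(1,2) w unfolding convex_vset_def by blast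
qed

lemma halfspaces_image:
  assumes f: "graph_automorphism E f" and A: "A \<in> halfspaces E"
  shows "f ` A \<in> halfspaces E"
proof -
  have compl: "f ` (- A) = - (f ` A)"
    using f unfolding graph_automorphism_def by (simp add: bij_image_Compl_eq)
  moreover have "f ` (- A) \<noteq> {}"
    using A unfolding halfspaces_def by auto
  ultimately have "f ` A \<noteq> UNIV"
    by auto
  moreover have "convex_vset E (f ` A)"
    using A by (intro convex_vset_image[OF f]) (simp add: halfspaces_def)
  moreover have "convex_vset E (- (f ` A))"
    unfolding compl[symmetric] using A by (intro convex_vset_image[OF f]) (simp add: halfspaces_def)
  ultimately show ?thesis
    using A unfolding halfspaces_def by simp
qed

lemma halfspaces_image_iff:
  assumes f: "graph_automorphism E f"
  shows "f ` A \<in> halfspaces E \<longleftrightarrow> A \<in> halfspaces E"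
proof
  assume "f ` A \<in> halfspaces E"
  then have "inv_into UNIV f ` f ` A \<in> halfspaces E"
    by (rule halfspaces_image[OF graph_automorphism_inv[OF f]])
  then show "A \<in> halfspaces E"
    using f unfolding graph_automorphism_def by (simp add: bij_is_inj image_inv_f_f)
qed (rule halfspaces_image[OF f])

lemma tightly_contains_image:
  assumes f: "graph_automorphism E f" and AB: "tightly_contains E A B"
  shows "tightly_contains E (f ` A) (f ` B)"
proof -
  have inj: "inj f" and surj: "surj f"
    using f unfolding graph_automorphism_def by (auto simp: bij_is_inj bij_is_surj)
  have psubset: "f ` X \<subset> f ` Y \<longleftrightarrow> X \<subset> Y" for X Y
    using inj by (simp add: psubset_eq inj_image_subset_iff inj_image_eq_iff)
  have "f ` B \<subset> f ` A"
    using AB psubset unfolding tightly_contains_def by simp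
  moreover have "\<not> (\<exists>C\<in>halfspaces E. C \<subset> f ` A \<and> f ` B \<subset> C)"
  proof (intro notI, elim bexE)
    fix C assume C: "C \<in> halfspaces E" and between: "C \<subset> f ` A \<and> f ` B \<subset> C"
    have C_eq: "f ` (f -` C) = C" using surj by (rule surj_image_vimage_eq)
    then have "f -` C \<in> halfspaces E"
      using C halfspaces_image_iff[OF f, of "f -` C"] by simp
    moreover have "f -` C \<subset> A" "B \<subset> f -` C"
      using between psubset[of "f -` C" A] psubset[of B "f -` C"] unfolding C_eq by simp_all
    ultimately show False
      using AB unfolding tightly_contains_def by blast
  qed
  ultimately show ?thesis
    unfolding tightly_contains_def by (rule conjI)
qed

lemma segment_image:
  assumes f: "graph_automorphism E f" and \<gamma>: "segment E \<gamma>"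
  shows "segment E (map ((`) f) \<gamma>)"
proof -
  have "successively (tightly_contains E) (map ((`) f) \<gamma>)"
    using \<gamma> unfolding segment_iff_successively successively_map
    by (auto elim: successively_mono intro: tightly_contains_image[OF f])
  then show ?thesis
    using \<gamma> halfspaces_image[OF f] unfolding segment_iff_successively by auto
qed

section \<open>Segments and packings\<close>

lemma seg_reverse_seg_reverse [simp]: "seg_reverse (seg_reverse s) = s"
  unfolding seg_reverse_def by (simp add: rev_map comp_def)

lemma set_seg_reverse: "set (seg_reverse s) = uminus ` set s"
  unfolding seg_reverse_def by simp

lemma transverse_Compl: "transverse (- A) (- B) \<longleftrightarrow> transverse A B"
  unfolding transverse_def nested_def by auto

lemma overlap_commute: "overlap s t \<longleftrightarrow> overlap t s"
  unfolding overlap_def transverse_def nested_def by blast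

lemma overlap_seg_reverse: "overlap (seg_reverse s) (seg_reverse t) \<longleftrightarrow> overlap s t"
  unfolding overlap_def set_seg_reverse by (auto simp: transverse_Compl)

lemma overlap_self: "s \<noteq> [] \<Longrightarrow> overlap s s"
  unfolding overlap_def by (cases s) auto

lemma nested_hs_interval:
  "A \<in> hs_interval E a b \<Longrightarrow> B \<in> hs_interval E a b \<Longrightarrow> nested A B \<Longrightarrow> A \<subseteq> B \<or> B \<subseteq> A"
  unfolding hs_interval_def nested_def by blast

lemma non_overlapping_comparable:
  assumes "\<not> overlap s t" "set s \<subseteq> hs_interval E a b" "set t \<subseteq> hs_interval E a b"
    and "A \<in> set s" "B \<in> set t"
  shows "A \<noteq> B \<and> (A \<subseteq> B \<or> B \<subseteq> A)"
  using assms nested_hs_interval[of A E a b B] unfolding overlap_def transverse_def by blast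

lemma segment_nth_psubset:
  assumes "segment E s" "i < j" "j < length s"
  shows "s ! j \<subset> s ! i"
proof -
  have "successively (\<lambda>A B. B \<subset> A) s"
    using assms(1) unfolding segment_iff_successively
    by (auto elim: successively_mono simp: tightly_contains_def)
  then have "sorted_wrt (\<lambda>A B. B \<subset> A) s"
    by (simp add: successively_conv_sorted_wrt transp_def)
  from sorted_wrt_nth_less[OF this assms(2,3)] show ?thesis .
qed

lemma segment_no_halfspace_between:
  assumes "segment E s" "Suc i < length s" "C \<in> halfspaces E" "C \<subset> s ! i" "s ! Suc i \<subset> C"
  shows False
  using assms unfolding segment_def tightly_contains_def by blast

lemma segment_crossing:
  assumes "segment E s" "set s \<subseteq> hs_interval E a b"
    and "\<not> set s \<subseteq> hs_interval E a m" "\<not> set s \<subseteq> hs_interval E m b"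
  shows "\<exists>i. Suc i < length s \<and> m \<in> s ! i \<and> m \<notin> s ! Suc i"
proof -
  obtain A B where AB: "A \<in> set s" "A \<notin> hs_interval E a m" "B \<in> set s" "B \<notin> hs_interval E m b"
    using assms(3,4) by blast
  then have "m \<notin> A" "m \<in> B"
    using assms(2) unfolding hs_interval_def by blast+
  then obtain j k where j: "j < length s" "m \<notin> s ! j" and k: "k < length s" "m \<in> s ! k"
    using AB(1,3) by (metis in_set_conv_nth)
  have "\<not> j < k" "j \<noteq> k"
    using segment_nth_psubset[OF assms(1), of j k] j k by blast+
  then have "k < j" by simp
  then obtain i where "k \<le> i" "i < j" "m \<in> s ! i" "m \<notin> s ! Suc i"
    using ex_crossing_index[of k j "\<lambda>i. m \<notin> s ! i"] j k by auto
  then show ?thesis using j(1) by (intro exI[of _ i]) simp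
qed

lemma crossing_segments_overlap:
  assumes "segment E s" "segment E t" "set s \<subseteq> hs_interval E a b" "set t \<subseteq> hs_interval E a b"
    and "\<not> set s \<subseteq> hs_interval E a m" "\<not> set s \<subseteq> hs_interval E m b"
    and "\<not> set t \<subseteq> hs_interval E a m" "\<not> set t \<subseteq> hs_interval E m b"
  shows "overlap s t"
proof (rule ccontr)
  have below: False
    if "segment E s" "segment E t" "\<not> overlap s t"
      "set s \<subseteq> hs_interval E a b" "set t \<subseteq> hs_interval E a b"
      "Suc i < length s" "m \<in> s ! i" "m \<notin> s ! Suc i"
      "j < length t" "m \<in> t ! j" "t ! j \<subseteq> s ! i"
    for s t i j
  proof -
    have "s ! i \<in> set s" "s ! Suc i \<in> set s" "t ! j \<in> set t"
      using that(6,9) by simp_all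
    then have "t ! j \<noteq> s ! i" "s ! Suc i \<noteq> t ! j" "s ! Suc i \<subseteq> t ! j \<or> t ! j \<subseteq> s ! Suc i"
      using non_overlapping_comparable[OF that(3-5)] by blast+
    then have "s ! Suc i \<subset> t ! j" "t ! j \<subset> s ! i"
      using that(8,10,11) by auto
    moreover have "t ! j \<in> halfspaces E"
      using that(2,9) unfolding segment_def by auto
    ultimately show False
      using segment_no_halfspace_between[OF that(1,6)] by blast
  qed
  assume "\<not> overlap s t"
  obtain i where i: "Suc i < length s" "m \<in> s ! i" "m \<notin> s ! Suc i"
    using segment_crossing[OF assms(1,3,5,6)] by blast
  obtain j where j: "Suc j < length t" "m \<in> t ! j" "m \<notin> t ! Suc j"
    using segment_crossing[OF assms(2,4,7,8)] by blast
  have "s ! i \<in> set s" "t ! j \<in> set t"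
    using i(1) j(1) by simp_all
  then have "t ! j \<subseteq> s ! i \<or> s ! i \<subseteq> t ! j"
    using non_overlapping_comparable[OF \<open>\<not> overlap s t\<close> assms(3,4)] by blast
  then show False
  proof
    assume "t ! j \<subseteq> s ! i"
    then show False
      by (rule below[OF assms(1,2) \<open>\<not> overlap s t\<close> assms(3,4) i Suc_lessD[OF j(1)] j(2)])
  next
    assume "s ! i \<subseteq> t ! j"
    moreover have "\<not> overlap t s"
      using \<open>\<not> overlap s t\<close> overlap_commute by blast
    ultimately show False
      using below[OF assms(2,1) _ assms(4,3) j Suc_lessD[OF i(1)] i(2)] by blast
  qed
qed

lemma segment_below_segment:
  assumes "segment E s" "segment E t" "\<not> overlap s t"
    and "set s \<subseteq> hs_interval E a b" "set t \<subseteq> hs_interval E a b"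
    and "t ! 0 \<subseteq> s ! 0" "A \<in> set s" "B \<in> set t"
  shows "B \<subseteq> A"
proof -
  have t0: "t ! 0 \<in> set t" "t ! 0 \<in> halfspaces E"
    using assms(2) unfolding segment_def by (auto simp: nth_mem)
  have "t ! 0 \<subseteq> s ! i" if "i < length s" for i
    using that
  proof (induction i)
    case 0
    then show ?case using assms(6) by simp
  next
    case (Suc i)
    have cmp: "s ! k \<noteq> t ! 0 \<and> (s ! k \<subseteq> t ! 0 \<or> t ! 0 \<subseteq> s ! k)" if "k < length s" for k
      using non_overlapping_comparable[OF assms(3-5) _ t0(1)] that by simp
    show ?case
    proof (rule ccontr)
      assume "\<not> t ! 0 \<subseteq> s ! Suc i"
      then have "s ! Suc i \<subset> t ! 0" "t ! 0 \<subset> s ! i"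
        using Suc cmp[of i] cmp[of "Suc i"] by auto
      then show False
        using segment_no_halfspace_between[OF assms(1) Suc.prems t0(2)] by simp
    qed
  qed
  moreover have "B \<subseteq> t ! 0"
  proof -
    obtain j where "j < length t" "B = t ! j"
      using assms(8) by (metis in_set_conv_nth)
    then show ?thesis
      using segment_nth_psubset[OF assms(2), of 0 j] by (cases "j = 0") auto
  qed
  ultimately show ?thesis
    using assms(7) by (auto simp: in_set_conv_nth)
qed

lemma Nil_notin_copies: "segment E \<gamma> \<Longrightarrow> [] \<notin> copies G \<phi> \<gamma>"
  unfolding copies_def segment_def by auto

definition packing :: "('v \<Rightarrow> 'v \<Rightarrow> bool) \<Rightarrow> 'v set list set \<Rightarrow> 'v \<Rightarrow> 'v \<Rightarrow> 'v set list set \<Rightarrow> bool" where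
  "packing E C a b S \<longleftrightarrow> S \<subseteq> C \<and> finite S \<and> (\<forall>s\<in>S. set s \<subseteq> hs_interval E a b) \<and>
     pairwise (\<lambda>s t. \<not> overlap s t) S"

lemma packingD:
  assumes "packing E C a b S"
  shows "S \<subseteq> C" "finite S" "s \<in> S \<Longrightarrow> set s \<subseteq> hs_interval E a b"
    and "s \<in> S \<Longrightarrow> t \<in> S \<Longrightarrow> s \<noteq> t \<Longrightarrow> \<not> overlap s t"
  using assms unfolding packing_def by (auto dest: pairwiseD)

lemma c_count_eq_Max_packing:
  "c_count E G \<phi> \<gamma> a b = Max {card S | S. packing E (copies G \<phi> \<gamma>) a b S}"
  unfolding c_count_def packing_def pairwise_def by simp

lemma packing_subset:
  "packing E C a b S \<Longrightarrow> T \<subseteq> S \<Longrightarrow> \<forall>s\<in>T. set s \<subseteq> hs_interval E a' b' \<Longrightarrow> packing E C a' b' T"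
  unfolding packing_def by (auto intro: finite_subset pairwise_subset)

lemma card_packing_le:
  assumes "finite (hs_interval E a b)" "[] \<notin> C" "packing E C a b S"
  shows "card S \<le> card (hs_interval E a b)"
proof (rule card_inj_on_le[OF _ _ assms(1)])
  have ne: "s \<noteq> []" if "s \<in> S" for s
    using assms(2,3) that unfolding packing_def by auto
  then show "inj_on hd S"
    using assms(3) overlap_def unfolding packing_def pairwise_def inj_on_def by (metis list.set_sel(1))
  show "hd ` S \<subseteq> hs_interval E a b"
    using assms(3) ne unfolding packing_def by (metis image_subsetI list.set_sel(1) subsetD)
qed

lemma finite_packing_cards:
  "finite (hs_interval E a b) \<Longrightarrow> [] \<notin> C \<Longrightarrow> finite {card S | S. packing E C a b S}"
  by (rule finite_subset[of _ "{..card (hs_interval E a b)}"]) (auto dest: card_packing_le)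

lemma packing_seg_reverse:
  assumes "packing E C a b S"
  shows "packing E (seg_reverse ` C) b a (seg_reverse ` S)"
proof -
  have "set (seg_reverse s) \<subseteq> hs_interval E b a" if "set s \<subseteq> hs_interval E a b" for s
    using that halfspaces_Compl unfolding set_seg_reverse hs_interval_def by auto
  moreover have "pairwise (\<lambda>s t. \<not> overlap s t) (seg_reverse ` S)"
    using assms unfolding packing_def pairwise_image overlap_seg_reverse by (simp add: pairwise_def)
  ultimately show ?thesis
    using assms unfolding packing_def by blast
qed

lemma card_packings_seg_reverse:
  "{card S | S. packing E (seg_reverse ` C) a b S} = {card S | S. packing E C b a S}"
proof -
  have card_eq: "card (seg_reverse ` S) = card S" for S
    by (rule card_image) (metis inj_onI seg_reverse_seg_reverse)
  show ?thesis
  proof (intro equalityI subsetI)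
    fix n assume "n \<in> {card S | S. packing E (seg_reverse ` C) a b S}"
    then obtain S where "packing E (seg_reverse ` C) a b S" "n = card S"
      by blast
    moreover have "seg_reverse ` seg_reverse ` C = C"
      by (simp add: image_image)
    ultimately have "packing E C b a (seg_reverse ` S)" "n = card (seg_reverse ` S)"
      using packing_seg_reverse card_eq by metis+
    then show "n \<in> {card S | S. packing E C b a S}"
      by blast
  next
    fix n assume "n \<in> {card S | S. packing E C b a S}"
    then obtain S where "packing E C b a S" "n = card S"
      by blast
    then have "packing E (seg_reverse ` C) a b (seg_reverse ` S)" "n = card (seg_reverse ` S)"
      using packing_seg_reverse card_eq by metis+
    then show "n \<in> {card S | S. packing E (seg_reverse ` C) a b S}"
      by blast
  qed
qed

lemma packing_merge:
  assumes S: "packing E C a m S" and T: "packing E C m b T"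
    and am: "hs_interval E a m \<subseteq> hs_interval E a b" and mb: "hs_interval E m b \<subseteq> hs_interval E a b"
  shows "packing E C a b ({s \<in> S. \<forall>t\<in>T. \<not> overlap s t} \<union> T)" (is "packing E C a b (?S' \<union> T)")
proof -
  have "pairwise (\<lambda>s t. \<not> overlap s t) (?S' \<union> T)"
    unfolding pairwise_def
  proof (intro ballI impI)
    fix s t assume "s \<in> ?S' \<union> T" "t \<in> ?S' \<union> T" "s \<noteq> t"
    then consider "s \<in> S" "t \<in> S" | "s \<in> T" "t \<in> T" | "s \<in> ?S'" "t \<in> T" | "s \<in> T" "t \<in> ?S'"
      by blast
    then show "\<not> overlap s t"
      using S T \<open>s \<noteq> t\<close> overlap_commute unfolding packing_def pairwise_def by cases blast+
  qed
  moreover have "\<forall>s \<in> ?S' \<union> T. set s \<subseteq> hs_interval E a b"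
    using S T am mb unfolding packing_def by blast
  ultimately show ?thesis
    using S T unfolding packing_def by auto
qed

lemma card_crossing_le_1:
  assumes S: "packing E C a b S" and C: "\<forall>s\<in>C. segment E s"
  shows "card {s \<in> S. \<not> set s \<subseteq> hs_interval E a m \<and> \<not> set s \<subseteq> hs_interval E m b} \<le> 1"
    (is "card ?crossing \<le> 1")
proof -
  have "s = t" if "s \<in> ?crossing" "t \<in> ?crossing" for s t
  proof (rule ccontr)
    assume "s \<noteq> t"
    have "segment E s" "segment E t" "set s \<subseteq> hs_interval E a b" "set t \<subseteq> hs_interval E a b"
      using that C packingD(1,3)[OF S] by blast+
    then have "overlap s t"
      using that by (intro crossing_segments_overlap) blast+
    then show False
      using packingD(4)[OF S] that \<open>s \<noteq> t\<close> by blast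
  qed
  moreover have "finite ?crossing"
    using packingD(2)[OF S] by simp
  ultimately show ?thesis
    using card_le_Suc0_iff_eq[of ?crossing] by simp
qed

section \<open>Counting copies under a non-transverse action\<close>

locale median_graph_action =
  fixes E :: "'v \<Rightarrow> 'v \<Rightarrow> bool" and G :: "('g, 'm) monoid_scheme" and \<phi> :: "'g \<Rightarrow> 'v \<Rightarrow> 'v"
  assumes median: "median_graph E"
    and action: "group_action G (UNIV :: 'v set) \<phi>"
    and automorphism: "\<forall>h\<in>carrier G. \<forall>u v. E u v \<longleftrightarrow> E (\<phi> h u) (\<phi> h v)"
begin

lemma graph_automorphism_action: "h \<in> carrier G \<Longrightarrow> graph_automorphism E (\<phi> h)"
  using group_action.inj_prop[OF action] group_action.surj_prop[OF action] automorphism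
  unfolding graph_automorphism_def bij_def by blast

lemma segment_copies: "segment E \<gamma> \<Longrightarrow> s \<in> copies G \<phi> \<gamma> \<Longrightarrow> segment E s"
  unfolding copies_def using segment_image[OF graph_automorphism_action] by auto

lemma copies_seg_reverse: "copies G \<phi> (seg_reverse \<gamma>) = seg_reverse ` copies G \<phi> \<gamma>"
proof -
  have "map ((`) (\<phi> h)) (seg_reverse \<gamma>) = seg_reverse (map ((`) (\<phi> h)) \<gamma>)" if "h \<in> carrier G" for h
    using graph_automorphism_action[OF that]
    unfolding seg_reverse_def graph_automorphism_def by (simp add: rev_map bij_image_Compl_eq)
  then show ?thesis
    unfolding copies_def Setcompr_eq_image image_image by (auto intro: image_cong)
qed

lemma nested_copies_nth:
  assumes "non_transverse_action E G \<phi>" "segment E \<gamma>"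
    and "s \<in> copies G \<phi> \<gamma>" "t \<in> copies G \<phi> \<gamma>" "j < length \<gamma>"
  shows "nested (s ! j) (t ! j)"
proof -
  obtain h k where h: "h \<in> carrier G" "s = map ((`) (\<phi> h)) \<gamma>"
    and k: "k \<in> carrier G" "t = map ((`) (\<phi> k)) \<gamma>"
    using assms(3,4) unfolding copies_def by auto
  interpret group G
    using action unfolding group_action_def group_hom_def by simp
  let ?g = "k \<otimes>\<^bsub>G\<^esub> inv\<^bsub>G\<^esub> h"
  have "\<phi> ?g (\<phi> h x) = \<phi> k x" for x
    using group_action.composition_rule[OF action] group_action.orbit_sym_aux[OF action] h(1) k(1)
    by simp
  then have "t ! j = \<phi> ?g ` (s ! j)"
    using h k assms(5) by (simp add: image_image)
  moreover have "s ! j \<in> halfspaces E"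
    using segment_copies[OF assms(2,3)] assms(5) h(2) unfolding segment_def by auto
  moreover have "?g \<in> carrier G" using h(1) k(1) by simp
  ultimately show ?thesis
    using assms(1) unfolding non_transverse_action_def transverse_def by metis
qed

lemma card_packing_le_c_count:
  assumes "segment E \<gamma>" "packing E (copies G \<phi> \<gamma>) a b S"
  shows "card S \<le> c_count E G \<phi> \<gamma> a b"
  unfolding c_count_eq_Max_packing
  using finite_packing_cards[OF median_graph_finite_hs_interval[OF median] Nil_notin_copies[OF assms(1)]] assms(2)
  by (intro Max_ge) auto

lemma ex_packing_card_eq_c_count:
  assumes "segment E \<gamma>"
  shows "\<exists>S. packing E (copies G \<phi> \<gamma>) a b S \<and> card S = c_count E G \<phi> \<gamma> a b"
proof -
  have "packing E (copies G \<phi> \<gamma>) a b {}"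
    unfolding packing_def by simp
  then show ?thesis
    using Max_in[OF finite_packing_cards[OF median_graph_finite_hs_interval[OF median] Nil_notin_copies[OF assms]]]
    unfolding c_count_eq_Max_packing by fastforce
qed

lemma c_count_seg_reverse: "c_count E G \<phi> (seg_reverse \<gamma>) a b = c_count E G \<phi> \<gamma> b a"
  unfolding c_count_eq_Max_packing copies_seg_reverse card_packings_seg_reverse ..

lemma omega_eq_c_count_diff: "omega E G \<phi> \<gamma> a b = int (c_count E G \<phi> \<gamma> a b) - int (c_count E G \<phi> \<gamma> b a)"
  unfolding omega_def c_count_seg_reverse ..

lemma c_count_quasi_subadditive:
  assumes \<gamma>: "segment E \<gamma>"
  shows "c_count E G \<phi> \<gamma> a b \<le> c_count E G \<phi> \<gamma> a m + c_count E G \<phi> \<gamma> m b + 1"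
proof -
  obtain S where S: "packing E (copies G \<phi> \<gamma>) a b S" "card S = c_count E G \<phi> \<gamma> a b"
    using ex_packing_card_eq_c_count[OF \<gamma>] by blast
  define S1 where "S1 = {s \<in> S. set s \<subseteq> hs_interval E a m}"
  define S2 where "S2 = {s \<in> S. set s \<subseteq> hs_interval E m b}"
  define crossing where "crossing = {s \<in> S. \<not> set s \<subseteq> hs_interval E a m \<and> \<not> set s \<subseteq> hs_interval E m b}"
  have "S = S1 \<union> S2 \<union> crossing"
    unfolding S1_def S2_def crossing_def by blast
  then have "card S \<le> card S1 + card S2 + card crossing"
    using card_Un_le[of S1 S2] card_Un_le[of "S1 \<union> S2" crossing] by simp
  moreover have "card S1 \<le> c_count E G \<phi> \<gamma> a m" "card S2 \<le> c_count E G \<phi> \<gamma> m b"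
    using packing_subset[OF S(1)] card_packing_le_c_count[OF \<gamma>] unfolding S1_def S2_def by auto
  moreover have "card crossing \<le> 1"
    unfolding crossing_def using S(1) segment_copies[OF \<gamma>] by (intro card_crossing_le_1) auto
  ultimately show ?thesis
    using S(2) by linarith
qed

lemma overlapping_copy_innermost:
  assumes nt: "non_transverse_action E G \<phi>" and \<gamma>: "segment E \<gamma>" and m: "m \<in> geod_interval E a b"
    and copies: "s \<in> copies G \<phi> \<gamma>" "s' \<in> copies G \<phi> \<gamma>" "t \<in> copies G \<phi> \<gamma>"
    and intervals: "set s \<subseteq> hs_interval E a m" "set s' \<subseteq> hs_interval E a m" "set t \<subseteq> hs_interval E m b"
    and "\<not> overlap s s'" "overlap s t"
  shows "s ! 0 \<subseteq> s' ! 0"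
proof (rule ccontr)
  have seg: "segment E s" "segment E s'" "segment E t"
    using segment_copies[OF \<gamma>] copies by blast+
  have len: "length s = length \<gamma>" "length s' = length \<gamma>" "length t = length \<gamma>"
    using copies unfolding copies_def by auto
  have "\<gamma> \<noteq> []" using \<gamma> unfolding segment_def by simp
  then have "s ! 0 \<in> set s" "s' ! 0 \<in> set s'"
    using len by simp_all
  moreover assume "\<not> s ! 0 \<subseteq> s' ! 0"
  ultimately have "s' ! 0 \<subseteq> s ! 0"
    using non_overlapping_comparable[OF \<open>\<not> overlap s s'\<close> intervals(1,2)] by blast
  note s'_below_s = segment_below_segment[OF seg(1,2) \<open>\<not> overlap s s'\<close> intervals(1,2) this]
  obtain A B where AB: "A \<in> set s" "B \<in> set t" "A = B \<or> transverse A B"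
    using \<open>overlap s t\<close> unfolding overlap_def by blast
  have "m \<in> A" "m \<notin> B"
    using AB(1,2) intervals(1,3) unfolding hs_interval_def by auto
  then have "transverse A B" using AB(3) by auto
  obtain j where j: "j < length \<gamma>" "B = t ! j"
    using AB(2) len(3) by (metis in_set_conv_nth)
  have "s' ! j \<in> set s'" "t ! j \<in> set t"
    using j(1) len by simp_all
  then have s'j: "s' ! j \<in> hs_interval E a m" and tj: "t ! j \<in> hs_interval E m b"
    using intervals(2,3) by blast+
  then have "s' ! j \<in> hs_interval E a b" "t ! j \<in> hs_interval E a b"
    using hs_interval_subset_geod_interval[OF m] by blast+
  then have "s' ! j \<subseteq> t ! j \<or> t ! j \<subseteq> s' ! j"
    by (rule nested_hs_interval[OF _ _ nested_copies_nth[OF nt \<gamma> copies(2,3) j(1)]])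
  moreover have "\<not> s' ! j \<subseteq> t ! j"
    using s'j tj unfolding hs_interval_def by blast
  ultimately have "t ! j \<subseteq> s' ! j"
    by blast
  also have "s' ! j \<subseteq> A"
    using s'_below_s AB(1) j(1) len(2) by simp
  finally have "nested A B"
    using j(2) unfolding nested_def by blast
  then show False
    using \<open>transverse A B\<close> unfolding transverse_def by simp
qed

lemma card_overlapping_le_1:
  assumes nt: "non_transverse_action E G \<phi>" and \<gamma>: "segment E \<gamma>" and m: "m \<in> geod_interval E a b"
    and S: "packing E (copies G \<phi> \<gamma>) a m S" and T: "packing E (copies G \<phi> \<gamma>) m b T"
  shows "card {s \<in> S. \<exists>t\<in>T. overlap s t} \<le> 1"
proof -
  have "s = s'" if s: "s \<in> S" "t \<in> T" "overlap s t" and s': "s' \<in> S" "t' \<in> T" "overlap s' t'"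
    for s s' t t'
  proof (rule ccontr)
    assume "s \<noteq> s'"
    then have "\<not> overlap s s'" "\<not> overlap s' s"
      using packingD(4)[OF S] s(1) s'(1) by auto
    have copies: "s \<in> copies G \<phi> \<gamma>" "s' \<in> copies G \<phi> \<gamma>" "t \<in> copies G \<phi> \<gamma>" "t' \<in> copies G \<phi> \<gamma>"
      using packingD(1)[OF S] packingD(1)[OF T] s(1,2) s'(1,2) by blast+
    have "s ! 0 \<subseteq> s' ! 0"
      using overlapping_copy_innermost[OF nt \<gamma> m copies(1,2,3)] packingD(3)[OF S] packingD(3)[OF T]
        s s' \<open>\<not> overlap s s'\<close> by simp
    moreover have "s' ! 0 \<subseteq> s ! 0"
      using overlapping_copy_innermost[OF nt \<gamma> m copies(2,1,4)] packingD(3)[OF S] packingD(3)[OF T]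
        s s' \<open>\<not> overlap s' s\<close> by simp
    moreover have "s ! 0 \<in> set s" "s' ! 0 \<in> set s'"
      using Nil_notin_copies[OF \<gamma>] copies(1,2) by (metis length_greater_0_conv nth_mem)+
    ultimately have "overlap s s'"
      unfolding overlap_def by auto
    then show False
      using \<open>\<not> overlap s s'\<close> by contradiction
  qed
  then have "\<forall>s\<in>{s \<in> S. \<exists>t\<in>T. overlap s t}. \<forall>s'\<in>{s \<in> S. \<exists>t\<in>T. overlap s t}. s = s'"
    by blast
  moreover have "finite {s \<in> S. \<exists>t\<in>T. overlap s t}"
    using packingD(2)[OF S] by simp
  ultimately show ?thesis
    using card_le_Suc0_iff_eq[of "{s \<in> S. \<exists>t\<in>T. overlap s t}"] by simp
qed

lemma c_count_quasi_superadditive: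
  assumes nt: "non_transverse_action E G \<phi>" and \<gamma>: "segment E \<gamma>" and m: "m \<in> geod_interval E a b"
  shows "c_count E G \<phi> \<gamma> a m + c_count E G \<phi> \<gamma> m b \<le> c_count E G \<phi> \<gamma> a b + 1"
proof -
  obtain S where S: "packing E (copies G \<phi> \<gamma>) a m S" "card S = c_count E G \<phi> \<gamma> a m"
    using ex_packing_card_eq_c_count[OF \<gamma>] by blast
  obtain T where T: "packing E (copies G \<phi> \<gamma>) m b T" "card T = c_count E G \<phi> \<gamma> m b"
    using ex_packing_card_eq_c_count[OF \<gamma>] by blast
  define kept where "kept = {s \<in> S. \<forall>t\<in>T. \<not> overlap s t}"
  define dropped where "dropped = {s \<in> S. \<exists>t\<in>T. overlap s t}"
  have fin: "finite kept" "finite T"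
    using packingD(2)[OF S(1)] packingD(2)[OF T(1)] unfolding kept_def by simp_all
  have "kept \<inter> T = {}"
  proof (rule equals0I)
    fix s assume "s \<in> kept \<inter> T"
    then have "s \<noteq> []" "\<not> overlap s s"
      using packingD(1)[OF T(1)] Nil_notin_copies[OF \<gamma>] unfolding kept_def by auto
    then show False using overlap_self by blast
  qed
  then have "card kept + card T = card (kept \<union> T)"
    using fin by (simp add: card_Un_disjoint)
  also have "\<dots> \<le> c_count E G \<phi> \<gamma> a b"
    using packing_merge[OF S(1) T(1) hs_interval_subset_geod_interval[OF m]]
    unfolding kept_def by (rule card_packing_le_c_count[OF \<gamma>])
  finally have "card kept + card T \<le> c_count E G \<phi> \<gamma> a b" .
  moreover have "card S \<le> card kept + card dropped"
  proof -
    have "S = kept \<union> dropped"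
      unfolding kept_def dropped_def by blast
    then show ?thesis
      using card_Un_le by metis
  qed
  moreover have "card dropped \<le> 1"
    unfolding dropped_def by (rule card_overlapping_le_1[OF nt \<gamma> m S(1) T(1)])
  ultimately show ?thesis
    using S(2) T(2) by linarith
qed

lemma omega_antisym: "omega E G \<phi> \<gamma> a b = - omega E G \<phi> \<gamma> b a"
  by (simp add: omega_eq_c_count_diff)

lemma omega_quasi_additive:
  assumes nt: "non_transverse_action E G \<phi>" and \<gamma>: "segment E \<gamma>" and m: "m \<in> geod_interval E a b"
  shows "\<bar>omega E G \<phi> \<gamma> a b - (omega E G \<phi> \<gamma> a m + omega E G \<phi> \<gamma> m b)\<bar> \<le> 2"
proof -
  have "m \<in> geod_interval E b a"
    using m median_graph_geod_interval_commute[OF median] by simp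
  then show ?thesis
    using c_count_quasi_subadditive[OF \<gamma>, of a b m] c_count_quasi_subadditive[OF \<gamma>, of b a m]
      c_count_quasi_superadditive[OF nt \<gamma> m] c_count_quasi_superadditive[OF nt \<gamma> \<open>m \<in> geod_interval E b a\<close>]
    unfolding omega_eq_c_count_diff by linarith
qed

end

theorem lemma4p7:
  fixes E :: "'v \<Rightarrow> 'v \<Rightarrow> bool" and G :: "('g, 'm) monoid_scheme" and \<phi> :: "'g \<Rightarrow> 'v \<Rightarrow> 'v"
    and \<gamma> :: "'v set list" and x y z :: 'v
  assumes "median_graph E"
    and "group_action G (UNIV :: 'v set) \<phi>"
    and "\<forall>h\<in>carrier G. \<forall>u v. E u v \<longleftrightarrow> E (\<phi> h u) (\<phi> h v)"
    and "non_transverse_action E G \<phi>"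
    and "segment E \<gamma>"
  shows "\<bar>omega E G \<phi> \<gamma> x y + omega E G \<phi> \<gamma> y z + omega E G \<phi> \<gamma> z x\<bar> \<le> 6"
proof -
  interpret median_graph_action E G \<phi>
    by (rule median_graph_action.intro) (fact assms)+
  obtain m where m: "m \<in> geod_interval E x y" "m \<in> geod_interval E y z" "m \<in> geod_interval E z x"
    using assms(1) median_graph_geod_interval_commute[OF assms(1)] unfolding median_graph_def by blast
  let ?\<omega> = "omega E G \<phi> \<gamma>"
  have "\<bar>?\<omega> x y - (?\<omega> x m + ?\<omega> m y)\<bar> \<le> 2" "\<bar>?\<omega> y z - (?\<omega> y m + ?\<omega> m z)\<bar> \<le> 2"
    "\<bar>?\<omega> z x - (?\<omega> z m + ?\<omega> m x)\<bar> \<le> 2"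
    using omega_quasi_additive[OF assms(4,5)] m by blast+
  moreover have "?\<omega> m x = - ?\<omega> x m" "?\<omega> m y = - ?\<omega> y m" "?\<omega> m z = - ?\<omega> z m"
    by (rule omega_antisym)+
  ultimately show ?thesis
    by linarith
qed

end
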